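(* For every sufficiently large $n$ there is a tensor $T\in\mathbb{C}^{n\times n\times n}$ with $T\notin\overline{\mathrm{OT}_n(\mathbb{C})}$ such that, for each of its three families of slices (the $x$-, $y$- and $z$-slices), denoted $M_1,\dots,M_n$, and for each of the two families of $n^2$ matrices $\{M_k^TM_l\}_{k,l}$ and $\{M_kM_l^T\}_{k,l}$, the following hold: (i) the matrices of the family are symmetric and pairwise commute; (ii) the subalgebra of $M_n(\mathbb{C})$ generated by the matrices of the family and the identity matrix has dimension at most $n$; (iii) the centralizer of the matrices of the family has dimension at least $n$.
   Context: Associate to $T$ the trilinear form $t=\sum_{i,j,k}T_{ijk}x_iy_jz_k$. $\mathrm{OT}_n(\mathbb{C})$ is the set of tensors whose trilinear form can be written $g(Ax,By,Cz)$ with $A,B,C\in M_n(\mathbb{C})$ satisfying $A^TA=B^TB=C^TC=\mathrm{Id}$ and $g=\sum_{i=1}^n\alpha_ix_iy_iz_i$; closure is in the Euclidean topology. Slices: $X_k=(T_{kjl})_{j,l}$, $Y_k=(T_{ikl})_{i,l}$, $Z_k=(T_{ijk})_{i,j}$. The centralizer of a set of matrices is the set of $M\in M_n(\mathbb{C})$ commuting with all of them. *)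

theory Defs
  imports "HOL-Library.Function_Algebras" "HOL-Analysis.Analysis"
begin

text \<open>Square n x n complex matrices are represented as functions
  nat => nat => complex that vanish outside {0..<n} x {0..<n};
  tensors in C^(n x n x n) as functions nat => nat => nat => complex
  vanishing outside {0..<n}^3.  Indices run over 0..<n.\<close>

type_synonym cmat = "nat \<Rightarrow> nat \<Rightarrow> complex"
type_synonym ctensor = "nat \<Rightarrow> nat \<Rightarrow> nat \<Rightarrow> complex"

definition sqmats :: "nat \<Rightarrow> cmat set" where
  "sqmats n = {M. \<forall>i j. \<not> (i < n \<and> j < n) \<longrightarrow> M i j = 0}"

definition tensors :: "nat \<Rightarrow> ctensor set" where
  "tensors n = {T. \<forall>i j k. \<not> (i < n \<and> j < n \<and> k < n) \<longrightarrow> T i j k = 0}"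

definition mmult :: "nat \<Rightarrow> cmat \<Rightarrow> cmat \<Rightarrow> cmat" where
  "mmult n A B = (\<lambda>i j. \<Sum>l<n. A i l * B l j)"

definition mtrans :: "cmat \<Rightarrow> cmat" where
  "mtrans A = (\<lambda>i j. A j i)"

definition mid :: "nat \<Rightarrow> cmat" where
  "mid n = (\<lambda>i j. if i = j \<and> i < n then 1 else 0)"

definition mscale :: "complex \<Rightarrow> cmat \<Rightarrow> cmat" where
  "mscale c A = (\<lambda>i j. c * A i j)"

definition mdim :: "cmat set \<Rightarrow> nat" where
  "mdim S = vector_space.dim mscale S"

definition orthogonal_cmat :: "nat \<Rightarrow> cmat \<Rightarrow> bool" where
  "orthogonal_cmat n A \<longleftrightarrow> A \<in> sqmats n \<and> mmult n (mtrans A) A = mid n"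

text \<open>OT_n(C): tensors whose trilinear form is g(Ax,By,Cz) with
  g = sum_l alpha_l x_l y_l z_l and A,B,C complex orthogonal, i.e.
  T_ijk = sum_l alpha_l A_li B_lj C_lk.\<close>
definition OT :: "nat \<Rightarrow> ctensor set" where
  "OT n = {T \<in> tensors n. \<exists>A B C (\<alpha>::nat \<Rightarrow> complex).
     orthogonal_cmat n A \<and> orthogonal_cmat n B \<and> orthogonal_cmat n C \<and>
     (\<forall>i<n. \<forall>j<n. \<forall>k<n. T i j k = (\<Sum>l<n. \<alpha> l * A l i * B l j * C l k))}"

definition xslice :: "ctensor \<Rightarrow> nat \<Rightarrow> cmat" where
  "xslice T k = (\<lambda>j l. T k j l)"
definition yslice :: "ctensor \<Rightarrow> nat \<Rightarrow> cmat" where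
  "yslice T k = (\<lambda>i l. T i k l)"
definition zslice :: "ctensor \<Rightarrow> nat \<Rightarrow> cmat" where
  "zslice T k = (\<lambda>i j. T i j k)"

definition subalgebra_mats :: "nat \<Rightarrow> cmat set \<Rightarrow> bool" where
  "subalgebra_mats n A \<longleftrightarrow> A \<subseteq> sqmats n \<and> 0 \<in> A \<and>
     (\<forall>X\<in>A. \<forall>Y\<in>A. X + Y \<in> A) \<and> (\<forall>c. \<forall>X\<in>A. mscale c X \<in> A) \<and>
     (\<forall>X\<in>A. \<forall>Y\<in>A. mmult n X Y \<in> A)"

definition gen_algebra :: "nat \<Rightarrow> cmat set \<Rightarrow> cmat set" where
  "gen_algebra n F = \<Inter>{A. subalgebra_mats n A \<and> F \<subseteq> A \<and> mid n \<in> A}"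

definition centralizer :: "nat \<Rightarrow> cmat set \<Rightarrow> cmat set" where
  "centralizer n F = {M \<in> sqmats n. \<forall>X\<in>F. mmult n M X = mmult n X M}"

definition symmetric_cmat :: "nat \<Rightarrow> cmat \<Rightarrow> bool" where
  "symmetric_cmat n M \<longleftrightarrow> (\<forall>i<n. \<forall>j<n. M i j = M j i)"

definition good_family :: "nat \<Rightarrow> cmat set \<Rightarrow> bool" where
  "good_family n F \<longleftrightarrow>
     (\<forall>X\<in>F. symmetric_cmat n X) \<and> (\<forall>X\<in>F. \<forall>Y\<in>F. mmult n X Y = mmult n Y X) \<and>
     mdim (gen_algebra n F) \<le> n \<and> mdim (centralizer n F) \<ge> n"

definition fam_TM :: "nat \<Rightarrow> (nat \<Rightarrow> cmat) \<Rightarrow> cmat set" where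
  "fam_TM n M = {mmult n (mtrans (M k)) (M l) | k l. k < n \<and> l < n}"
definition fam_MT :: "nat \<Rightarrow> (nat \<Rightarrow> cmat) \<Rightarrow> cmat set" where
  "fam_MT n M = {mmult n (M k) (mtrans (M l)) | k l. k < n \<and> l < n}"

end

theory Submission
  imports Defs
begin

text \<open>The witness is isotropic: its coordinates come in pairs \<open>2 q, 2 q + 1\<close> weighted by
  \<open>1\<close> and \<open>\<i>\<close>, so every contraction of two slices vanishes, all the families
  \<open>M\<^sub>k\<^sup>T M\<^sub>l\<close> and \<open>M\<^sub>k M\<^sub>l\<^sup>T\<close> are zero and (i)--(iii) hold trivially. It escapes the
  closure of \<open>OT\<^sub>n\<close> for dimension reasons: with \<open>m = n div 2\<close>, the \<open>m\<^sup>3\<close> entries with even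
  indices of a tensor in \<open>OT\<^sub>n\<close> are cubic polynomials in only \<open>3 n m\<close> parameters, so counting
  monomials yields a nonzero polynomial vanishing on them, hence on the closure. By Kronecker
  substitution that polynomial is nonzero at some point \<open>y\<close>, and the isotropic tensor with
  even-index entries \<open>y\<close> is the witness.\<close>

interpretation mat: vector_space mscale
  by unfold_locales (auto simp: mscale_def fun_eq_iff algebra_simps)

definition fscale :: "complex \<Rightarrow> ('a \<Rightarrow> complex) \<Rightarrow> 'a \<Rightarrow> complex" where
  "fscale c f = (\<lambda>x. c * f x)"

interpretation cfun: vector_space fscale
  by unfold_locales (auto simp: fscale_def fun_eq_iff algebra_simps)

lemma sum_apply: "(\<Sum>a\<in>A. f a) x = (\<Sum>a\<in>A. f a x)"
  by (induction A rule: infinite_finite_induct) auto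

section \<open>Polynomial functions\<close>

definition monomial :: "'v set \<Rightarrow> ('v \<Rightarrow> nat) \<Rightarrow> ('v \<Rightarrow> complex) \<Rightarrow> complex" where
  "monomial V e x = (\<Prod>v\<in>V. x v ^ e v)"

definition monomials :: "'v set \<Rightarrow> nat \<Rightarrow> (('v \<Rightarrow> complex) \<Rightarrow> complex) set" where
  "monomials V K = monomial V ` PiE V (\<lambda>_. {..K})"

definition polyfun :: "'v set \<Rightarrow> nat \<Rightarrow> (('v \<Rightarrow> complex) \<Rightarrow> complex) set" where
  "polyfun V K = cfun.span (monomials V K)"

lemma finite_monomials: "finite V \<Longrightarrow> finite (monomials V K)"
  unfolding monomials_def by (intro finite_imageI finite_PiE) auto

lemma card_monomials_le: "finite V \<Longrightarrow> card (monomials V K) \<le> (K + 1) ^ card V"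
proof -
  assume V: "finite V"
  have "card (monomials V K) \<le> card (PiE V (\<lambda>_. {..K}))"
    unfolding monomials_def by (rule card_image_le) (simp add: V finite_PiE)
  also have "\<dots> = (K + 1) ^ card V" using V by (simp add: card_PiE)
  finally show ?thesis .
qed

lemma polyfun_mono: "K \<le> L \<Longrightarrow> polyfun V K \<subseteq> polyfun V L"
  unfolding polyfun_def monomials_def by (intro cfun.span_mono image_mono PiE_mono) auto

lemma monomial_cong: "(\<And>v. v \<in> V \<Longrightarrow> x v = x' v) \<Longrightarrow> monomial V e x = monomial V e x'"
  unfolding monomial_def by simp

lemma monomial_mult: "monomial V e x * monomial V f x = monomial V (\<lambda>v. e v + f v) x"
  unfolding monomial_def by (simp add: power_add prod.distrib)

lemma monomial_restrict: "monomial V (restrict e V) = monomial V e"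
  unfolding monomial_def by (auto simp: fun_eq_iff intro!: prod.cong)

lemma monomials_mult:
  assumes "p \<in> monomials V K" "q \<in> monomials V L"
  shows "(\<lambda>x. p x * q x) \<in> monomials V (K + L)"
proof -
  obtain e f where e: "e \<in> PiE V (\<lambda>_. {..K})" "p = monomial V e"
    and f: "f \<in> PiE V (\<lambda>_. {..L})" "q = monomial V f"
    using assms unfolding monomials_def by auto
  have "(\<lambda>x. p x * q x) = monomial V (restrict (\<lambda>v. e v + f v) V)"
    using e f by (simp add: monomial_mult monomial_restrict)
  moreover have "restrict (\<lambda>v. e v + f v) V \<in> PiE V (\<lambda>_. {..K + L})"
    using e(1) f(1) by (auto simp: PiE_iff add_mono)
  ultimately show ?thesis unfolding monomials_def by blast
qed

lemma span_mult_left: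
  assumes "q \<in> cfun.span B" and "\<And>b. b \<in> B \<Longrightarrow> (\<lambda>x. p x * b x) \<in> cfun.span C"
  shows "(\<lambda>x. p x * q x) \<in> cfun.span C"
  using assms(1)
proof (induction rule: cfun.span_induct_alt)
  case base
  then show ?case using cfun.span_zero by (simp add: zero_fun_def)
next
  case (step c b q)
  have "(\<lambda>x. p x * (fscale c b + q) x) = fscale c (\<lambda>x. p x * b x) + (\<lambda>x. p x * q x)"
    by (auto simp: fun_eq_iff fscale_def algebra_simps)
  then show ?case using step assms(2) cfun.span_add cfun.span_scale by metis
qed

lemma polyfun_mult:
  assumes "p \<in> polyfun V K" and "q \<in> polyfun V L"
  shows "(\<lambda>x. p x * q x) \<in> polyfun V (K + L)"
proof -
  have "(\<lambda>x. q x * p x) \<in> polyfun V (K + L)"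
    unfolding polyfun_def
  proof (rule span_mult_left[OF assms(1)[unfolded polyfun_def]])
    fix b assume "b \<in> monomials V K"
    then have "(\<lambda>x. b x * q x) \<in> cfun.span (monomials V (K + L))"
      by (intro span_mult_left[OF assms(2)[unfolded polyfun_def]] cfun.span_base monomials_mult)
    then show "(\<lambda>x. q x * b x) \<in> cfun.span (monomials V (K + L))"
      by (simp add: mult.commute)
  qed
  then show ?thesis by (simp add: mult.commute)
qed

lemma var_in_polyfun: "finite V \<Longrightarrow> v \<in> V \<Longrightarrow> (\<lambda>x. x v) \<in> polyfun V 1"
proof -
  assume V: "finite V" "v \<in> V"
  have "monomial V (restrict (\<lambda>w. if w = v then 1 else 0) V) = (\<lambda>x. x v)"
    using V by (auto simp: monomial_restrict monomial_def fun_eq_iff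
        if_distrib[of "\<lambda>k. _ ^ k"] prod.delta cong: if_cong)
  moreover have "restrict (\<lambda>w. if w = v then 1 else 0) V \<in> PiE V (\<lambda>_. {..1::nat})" by auto
  ultimately show ?thesis unfolding polyfun_def monomials_def by (metis cfun.span_base image_eqI)
qed

lemma one_in_polyfun: "(\<lambda>x. 1) \<in> polyfun V 0"
proof -
  have "monomial V (restrict (\<lambda>w. 0) V) = (\<lambda>x. 1)"
    by (simp add: monomial_restrict monomial_def fun_eq_iff)
  moreover have "restrict (\<lambda>w. 0) V \<in> PiE V (\<lambda>_. {..0::nat})" by auto
  ultimately show ?thesis unfolding polyfun_def monomials_def by (metis cfun.span_base image_eqI)
qed

lemma polyfun_power:
  assumes "p \<in> polyfun V K" shows "(\<lambda>x. p x ^ k) \<in> polyfun V (K * k)"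
proof (induction k)
  case 0
  then show ?case using one_in_polyfun by simp
next
  case (Suc k)
  from polyfun_mult[OF assms Suc] show ?case by simp
qed

lemma polyfun_prod:
  assumes "finite A" "\<And>a. a \<in> A \<Longrightarrow> p a \<in> polyfun V (K a)"
  shows "(\<lambda>x. \<Prod>a\<in>A. p a x) \<in> polyfun V (\<Sum>a\<in>A. K a)"
  using assms
proof (induction A rule: finite_induct)
  case empty
  then show ?case using one_in_polyfun by simp
next
  case (insert a A)
  then show ?case using polyfun_mult[of "p a" V "K a"] by simp
qed

lemma polyfun_sum:
  assumes "\<And>a. a \<in> A \<Longrightarrow> p a \<in> polyfun V K"
  shows "(\<lambda>x. \<Sum>a\<in>A. p a x) \<in> polyfun V K"
proof -
  have "(\<Sum>a\<in>A. p a) \<in> polyfun V K"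
    using assms unfolding polyfun_def by (rule cfun.span_sum)
  moreover have "(\<Sum>a\<in>A. p a) = (\<lambda>x. \<Sum>a\<in>A. p a x)"
    by (simp add: fun_eq_iff sum_apply)
  ultimately show ?thesis by simp
qed

lemma span_card_less_imp_linear_relation:
  assumes E: "finite E" and B: "finite B" and sp: "g ` E \<subseteq> cfun.span B"
    and card: "card B < card E"
  shows "\<exists>c. (\<exists>e\<in>E. c e \<noteq> 0) \<and> (\<forall>x. (\<Sum>e\<in>E. c e * g e x) = 0)"
proof (cases "inj_on g E")
  case True
  have "\<not> cfun.independent (g ` E)"
  proof
    assume "cfun.independent (g ` E)"
    from cfun.independent_span_bound[OF B this sp] card card_image[OF True] show False
      by simp
  qed
  then obtain t u where t: "finite t" "t \<subseteq> g ` E" "(\<Sum>v\<in>t. fscale (u v) v) = 0"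
    and u: "\<exists>v\<in>t. u v \<noteq> 0"
    unfolding cfun.dependent_explicit by blast
  define c where "c e = (if g e \<in> t then u (g e) else 0)" for e
  show ?thesis
  proof (intro exI[of _ c] conjI allI)
    show "\<exists>e\<in>E. c e \<noteq> 0" using u t(2) unfolding c_def by auto
    fix x
    have "(\<Sum>e\<in>E. c e * g e x) = (\<Sum>v\<in>g ` E. if v \<in> t then u v * v x else 0)"
      by (auto simp: sum.reindex[OF True] c_def intro!: sum.cong)
    also have "\<dots> = (\<Sum>v\<in>t. fscale (u v) v) x"
      using t(2) E by (simp add: sum.If_cases Int_absorb1 sum_apply fscale_def)
    finally show "(\<Sum>e\<in>E. c e * g e x) = 0" using t(3) by simp
  qed
next
  case False
  then obtain e1 e2 where e: "e1 \<in> E" "e2 \<in> E" "e1 \<noteq> e2" "g e1 = g e2"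
    unfolding inj_on_def by blast
  define c where "c e = (if e = e1 then 1 else if e = e2 then -1 else 0 :: complex)" for e
  show ?thesis
  proof (intro exI[of _ c] conjI allI)
    show "\<exists>e\<in>E. c e \<noteq> 0" using e unfolding c_def by auto
    fix x
    have "(\<Sum>e\<in>E. c e * g e x) =
        (\<Sum>e\<in>E. (if e = e1 then g e1 x else 0) - (if e = e2 then g e2 x else 0))"
      by (rule sum.cong) (use e in \<open>auto simp: c_def\<close>)
    then show "(\<Sum>e\<in>E. c e * g e x) = 0" using e E by (simp add: sum_subtractf)
  qed
qed

lemma digit_sum_less:
  assumes "\<forall>u<D. e u \<le> K"
  shows "(\<Sum>u<D. e u * (K + 1) ^ u) < (K + 1 :: nat) ^ D"
  using assms
proof (induction D)
  case 0
  then show ?case by simp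
next
  case (Suc D)
  have "(\<Sum>u<Suc D. e u * (K + 1) ^ u) < (K + 1) ^ D + K * (K + 1) ^ D"
    using Suc by (simp only: sum.lessThan_Suc, intro add_less_le_mono mult_right_mono) auto
  also have "\<dots> = (K + 1) ^ Suc D" by (simp add: algebra_simps)
  finally show ?case .
qed

lemma digit_sum_inj:
  assumes "\<forall>u<D. e u \<le> K" "\<forall>u<D. f u \<le> K"
    and "(\<Sum>u<D. e u * (K + 1) ^ u) = (\<Sum>u<D. f u * (K + 1 :: nat) ^ u)"
  shows "\<forall>u<D. e u = f u"
  using assms
proof (induction D)
  case 0
  then show ?case by simp
next
  case (Suc D)
  let ?B = "(K + 1 :: nat) ^ D"
  have low: "(\<Sum>u<D. e u * (K + 1) ^ u) < ?B" "(\<Sum>u<D. f u * (K + 1) ^ u) < ?B"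
    using digit_sum_less[of D e K] digit_sum_less[of D f K] Suc.prems by auto
  have eq: "(\<Sum>u<D. e u * (K + 1) ^ u) + e D * ?B = (\<Sum>u<D. f u * (K + 1) ^ u) + f D * ?B"
    using Suc.prems(3) by simp
  have "e D = ((\<Sum>u<D. e u * (K + 1) ^ u) + e D * ?B) div ?B"
    using low(1) by simp
  also have "\<dots> = f D"
    unfolding eq using low(2) by simp
  finally have top: "e D = f D" .
  with eq have "(\<Sum>u<D. e u * (K + 1) ^ u) = (\<Sum>u<D. f u * (K + 1) ^ u)" by simp
  with Suc.IH Suc.prems have "\<forall>u<D. e u = f u" by simp
  with top show ?case by (simp add: less_Suc_eq)
qed

text \<open>Kronecker substitution \<open>y v = w ^ (K + 1) ^ i v\<close>, for an enumeration \<open>i\<close> of the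
  variables, turns the polynomial into a univariate one whose coefficients are those of the
  original polynomial.\<close>
lemma polynomial_nonzero_coeff_imp_nonzero_value:
  assumes V: "finite V" and c: "\<exists>e\<in>PiE V (\<lambda>_. {..K}). c e \<noteq> 0"
  shows "\<exists>y. (\<Sum>e\<in>PiE V (\<lambda>_. {..K}). c e * monomial V e y) \<noteq> 0"
proof (rule ccontr)
  let ?E = "PiE V (\<lambda>_. {..K})"
  let ?D = "card V"
  assume "\<not> ?thesis"
  then have zero: "\<And>y. (\<Sum>e\<in>?E. c e * monomial V e y) = 0" by auto
  obtain h where h: "bij_betw h {..<?D} V"
    using ex_bij_betw_nat_finite[OF V] by (auto simp: atLeast0LessThan)
  define i where "i = the_inv_into {..<?D} h"
  have ih: "i (h u) = u" if "u < ?D" for u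
    using h that unfolding i_def bij_betw_def by (simp add: the_inv_into_f_f)
  define s where "s e = (\<Sum>u<?D. e (h u) * (K + 1) ^ u)" for e :: "'a \<Rightarrow> nat"
  have bounded: "\<forall>u<?D. e (h u) \<le> K" if "e \<in> ?E" for e
    using that h by (auto simp: PiE_iff bij_betw_def)
  have inj: "inj_on s ?E"
  proof (rule inj_onI)
    fix e f assume ef: "e \<in> ?E" "f \<in> ?E" "s e = s f"
    then have eh: "\<forall>u<?D. e (h u) = f (h u)"
      using digit_sum_inj[of ?D "e \<circ> h" K "f \<circ> h"] bounded[OF ef(1)] bounded[OF ef(2)]
      unfolding s_def by simp
    have "e v = f v" if "v \<in> V" for v
    proof -
      from h that obtain u where "u < ?D" "v = h u" unfolding bij_betw_def by blast
      with eh show ?thesis by simp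
    qed
    then show "e = f" by (rule PiE_ext[OF ef(1,2)])
  qed
  have s_le: "s e \<le> (K + 1) ^ ?D" if "e \<in> ?E" for e
    using digit_sum_less[of ?D "e \<circ> h" K] bounded[OF that] unfolding s_def by simp
  have monomial_subst: "monomial V e (\<lambda>v. w ^ (K + 1) ^ i v) = w ^ s e" for e and w :: complex
  proof -
    have "monomial V e (\<lambda>v. w ^ (K + 1) ^ i v) = (\<Prod>u<?D. (w ^ (K + 1) ^ i (h u)) ^ e (h u))"
      unfolding monomial_def by (rule prod.reindex_bij_betw[OF h, symmetric])
    also have "\<dots> = (\<Prod>u<?D. w ^ (e (h u) * (K + 1) ^ u))"
      by (intro prod.cong) (auto simp: ih power_mult[symmetric] mult.commute)
    finally show ?thesis by (simp add: s_def power_sum)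
  qed
  define c' where "c' j = (if j \<in> s ` ?E then c (the_inv_into ?E s j) else 0)" for j
  have "(\<Sum>j\<le>(K + 1) ^ ?D. c' j * w ^ j) = 0" for w :: complex
  proof -
    have "(\<Sum>j\<le>(K + 1) ^ ?D. c' j * w ^ j) = (\<Sum>j\<in>s ` ?E. c' j * w ^ j)"
      by (rule sum.mono_neutral_right) (use s_le in \<open>auto simp: c'_def\<close>)
    also have "\<dots> = (\<Sum>e\<in>?E. c e * w ^ s e)"
      by (simp add: sum.reindex[OF inj] c'_def the_inv_into_f_f[OF inj])
    also have "\<dots> = (\<Sum>e\<in>?E. c e * monomial V e (\<lambda>v. w ^ (K + 1) ^ i v))"
      by (simp only: monomial_subst)
    finally show ?thesis using zero by simp
  qed
  moreover obtain e0 where e0: "e0 \<in> ?E" "c e0 \<noteq> 0" using c by blast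
  ultimately have "c' (s e0) = 0" using zero_polynom_imp_zero_coeffs s_le by blast
  then show False using e0 by (simp add: c'_def the_inv_into_f_f[OF inj])
qed

text \<open>Implicitization by counting: the \<open>(K + 1) ^ card V\<close> functions \<open>monomial V e \<circ> \<phi>\<close> lie
  in the span of fewer monomials on \<open>X\<close>.\<close>
lemma polynomial_relation_exists:
  fixes \<phi> :: "('x \<Rightarrow> complex) \<Rightarrow> 'v \<Rightarrow> complex"
  assumes X: "finite X" and V: "finite V"
    and \<phi>: "\<And>v. v \<in> V \<Longrightarrow> (\<lambda>x. \<phi> x v) \<in> polyfun X d"
    and count: "(d * K * card V + 1) ^ card X < (K + 1) ^ card V"
  shows "\<exists>c. (\<exists>e\<in>PiE V (\<lambda>_. {..K}). c e \<noteq> 0) \<and>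
     (\<forall>x. (\<Sum>e\<in>PiE V (\<lambda>_. {..K}). c e * monomial V e (\<phi> x)) = 0)"
proof -
  let ?E = "PiE V (\<lambda>_. {..K})"
  let ?B = "monomials X (d * K * card V)"
  have "(\<lambda>x. monomial V e (\<phi> x)) \<in> cfun.span ?B" if e: "e \<in> ?E" for e
  proof -
    have "(\<lambda>x. \<Prod>v\<in>V. \<phi> x v ^ e v) \<in> polyfun X (\<Sum>v\<in>V. d * e v)"
    proof (rule polyfun_prod[OF V])
      fix v assume "v \<in> V"
      from polyfun_power[OF \<phi>[OF this]] show "(\<lambda>x. \<phi> x v ^ e v) \<in> polyfun X (d * e v)" .
    qed
    moreover have "(\<Sum>v\<in>V. d * e v) \<le> d * K * card V"
      using sum_mono[of V "\<lambda>v. d * e v" "\<lambda>_. d * K"] e by (auto simp: PiE_iff mult_ac)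
    ultimately show ?thesis
      using polyfun_mono unfolding polyfun_def monomial_def by blast
  qed
  then have span: "(\<lambda>e x. monomial V e (\<phi> x)) ` ?E \<subseteq> cfun.span ?B" by blast
  have "card ?E = (K + 1) ^ card V" using V by (simp add: card_PiE)
  then have card: "card ?B < card ?E"
    using card_monomials_le[OF X, of "d * K * card V"] count by linarith
  have "finite ?E" using V by (simp add: finite_PiE)
  from span_card_less_imp_linear_relation[OF this finite_monomials[OF X] span card]
  show ?thesis by simp
qed

section \<open>Families of zero matrices\<close>

definition unit_mat :: "nat \<Rightarrow> nat \<Rightarrow> cmat" where
  "unit_mat a b = (\<lambda>i j. if i = a \<and> j = b then 1 else 0)"

lemma sqmats_subset_span_unit_mats:
  "sqmats n \<subseteq> mat.span ((\<lambda>(a, b). unit_mat a b) ` ({..<n} \<times> {..<n}))"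
proof
  fix M assume M: "M \<in> sqmats n"
  have "M = (\<Sum>(a, b)\<in>{..<n} \<times> {..<n}. mscale (M a b) (unit_mat a b))"
  proof (intro ext)
    fix i j
    have "(\<Sum>(a, b)\<in>{..<n} \<times> {..<n}. mscale (M a b) (unit_mat a b)) i j =
        (\<Sum>p\<in>{..<n} \<times> {..<n}. if p = (i, j) then M i j else 0)"
      unfolding sum_apply by (rule sum.cong) (auto simp: mscale_def unit_mat_def split: if_splits)
    also have "\<dots> = M i j" using M by (auto simp: sqmats_def)
    finally show "M i j = (\<Sum>(a, b)\<in>{..<n} \<times> {..<n}. mscale (M a b) (unit_mat a b)) i j" ..
  qed
  also have "\<dots> \<in> mat.span ((\<lambda>(a, b). unit_mat a b) ` ({..<n} \<times> {..<n}))"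
    by (intro mat.span_sum) (force intro: mat.span_scale mat.span_base)
  finally show "M \<in> mat.span ((\<lambda>(a, b). unit_mat a b) ` ({..<n} \<times> {..<n}))" .
qed

lemma card_le_mdim:
  assumes "B \<subseteq> S" "S \<subseteq> sqmats n" "mat.independent B"
  shows "card B \<le> mdim S"
proof -
  obtain C where C: "C \<subseteq> S" "mat.independent C" "S \<subseteq> mat.span C" "card C = mat.dim S"
    using mat.basis_exists by blast
  have "finite C"
    using mat.independent_span_bound[OF _ C(2)] C(1) assms(2) sqmats_subset_span_unit_mats
    by (meson finite_SigmaI finite_imageI finite_lessThan subset_trans)
  have "card B \<le> card C"
    using mat.independent_span_bound[OF \<open>finite C\<close> assms(3)] assms(1) C(3) by blast
  then show ?thesis using C(4) by (simp add: mdim_def)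
qed

lemma inj_diag_unit_mat: "inj (\<lambda>k. unit_mat k k)"
  by (rule injI) (auto simp: unit_mat_def fun_eq_iff split: if_splits)

lemma independent_diag_unit_mats: "mat.independent ((\<lambda>k. unit_mat k k) ` {..<n})"
proof (rule mat.independent_if_scalars_zero)
  fix c v assume zero: "(\<Sum>v\<in>(\<lambda>k. unit_mat k k) ` {..<n}. mscale (c v) v) = 0"
    and "v \<in> (\<lambda>k. unit_mat k k) ` {..<n}"
  then obtain k where k: "k < n" "v = unit_mat k k" by auto
  have "0 = (\<Sum>j<n. mscale (c (unit_mat j j)) (unit_mat j j)) k k"
    using zero by (simp add: sum.reindex[OF inj_on_subset[OF inj_diag_unit_mat]])
  also have "\<dots> = (\<Sum>j<n. if j = k then c (unit_mat k k) else 0)"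
    unfolding sum_apply by (rule sum.cong) (auto simp: mscale_def unit_mat_def)
  finally show "c v = 0" using k by simp
qed simp

lemma mmult_scalar_mats: "mmult n (mscale a (mid n)) (mscale b (mid n)) = mscale (a * b) (mid n)"
proof -
  have "(\<Sum>l<n. a * (if i = l \<and> i < n then 1 else 0) * (b * (if l = j \<and> l < n then 1 else 0))) =
      (\<Sum>l<n. if l = i then (if i = j \<and> i < n then a * b else 0) else 0)" for i j
    by (rule sum.cong) auto
  then show ?thesis by (simp add: mmult_def mscale_def mid_def fun_eq_iff)
qed

lemma gen_algebra_subset_scalar_mats:
  assumes "F \<subseteq> {0}"
  shows "gen_algebra n F \<subseteq> range (\<lambda>c. mscale c (mid n))"
proof -
  let ?S = "range (\<lambda>c. mscale c (mid n))"
  have "subalgebra_mats n ?S"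
    unfolding subalgebra_mats_def
  proof (intro conjI ballI allI)
    show "?S \<subseteq> sqmats n" by (auto simp: sqmats_def mscale_def mid_def)
    show "0 \<in> ?S" by (auto simp: mscale_def fun_eq_iff intro!: range_eqI[of _ _ 0])
    fix X Y assume "X \<in> ?S" "Y \<in> ?S"
    then obtain a b where ab: "X = mscale a (mid n)" "Y = mscale b (mid n)" by auto
    show "X + Y \<in> ?S"
      using ab by (auto simp: mscale_def fun_eq_iff algebra_simps intro!: range_eqI[of _ _ "a + b"])
    show "mmult n X Y \<in> ?S" using ab by (auto simp: mmult_scalar_mats)
  next
    fix c X assume "X \<in> ?S"
    then obtain a where "X = mscale a (mid n)" by auto
    then show "mscale c X \<in> ?S" by (auto simp: mscale_def fun_eq_iff intro!: range_eqI[of _ _ "c * a"])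
  qed
  moreover have "F \<subseteq> ?S" using assms by (auto simp: mscale_def fun_eq_iff intro!: range_eqI[of _ _ 0])
  moreover have "mid n \<in> ?S" by (auto simp: mscale_def fun_eq_iff intro!: range_eqI[of _ _ 1])
  ultimately show ?thesis unfolding gen_algebra_def by blast
qed

lemma good_family_if_subset_zero:
  assumes F: "F \<subseteq> {0}" and n: "1 \<le> n"
  shows "good_family n F"
  unfolding good_family_def
proof (intro conjI ballI)
  fix X assume "X \<in> F"
  then show "symmetric_cmat n X" using F by (auto simp: symmetric_cmat_def)
next
  fix X Y assume "X \<in> F" "Y \<in> F"
  then show "mmult n X Y = mmult n Y X" using F by auto
next
  have "gen_algebra n F \<subseteq> mat.span {mid n}"
    using gen_algebra_subset_scalar_mats[OF F] by (auto intro: mat.span_scale mat.span_base)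
  from mat.dim_le_card[OF this] show "mdim (gen_algebra n F) \<le> n"
    using n by (simp add: mdim_def)
next
  have "(\<lambda>k. unit_mat k k) ` {..<n} \<subseteq> centralizer n F"
    using F by (auto simp: centralizer_def sqmats_def unit_mat_def mmult_def zero_fun_def)
  moreover have "centralizer n F \<subseteq> sqmats n" by (auto simp: centralizer_def)
  ultimately have "card ((\<lambda>k. unit_mat k k) ` {..<n}) \<le> mdim (centralizer n F)"
    using card_le_mdim independent_diag_unit_mats by blast
  then show "n \<le> mdim (centralizer n F)"
    by (simp add: card_image[OF inj_on_subset[OF inj_diag_unit_mat]])
qed

section \<open>An isotropic tensor outside the closure of \<open>OT\<^sub>n\<close>\<close>

abbreviation cube :: "nat \<Rightarrow> (nat \<times> nat \<times> nat) set" where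
  "cube m \<equiv> {..<m} \<times> {..<m} \<times> {..<m}"

definition even_entries :: "ctensor \<Rightarrow> nat \<times> nat \<times> nat \<Rightarrow> complex" where
  "even_entries T v = T (2 * fst v) (2 * fst (snd v)) (2 * snd (snd v))"

lemma continuous_on_tensor_entry: "continuous_on UNIV (\<lambda>T :: ctensor. T i j k)"
proof -
  have "continuous_on UNIV (\<lambda>T :: ctensor. T i)" by simp
  then have "continuous_on UNIV (\<lambda>T :: ctensor. T i j)"
    by (rule continuous_on_product_then_coordinatewise)
  then show ?thesis by (rule continuous_on_product_then_coordinatewise)
qed

lemma parameter_count_less:
  fixes n m :: nat
  assumes m: "19 \<le> m" and n: "n \<le> 2 * m + 1"
  shows "(3 * m ^ 3 * m ^ 3 + 1) ^ (3 * n * m) < (m ^ 3 + 1) ^ m ^ 3"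
proof -
  let ?D = "m ^ 3"
  have "3 * ?D * ?D + 1 \<le> (?D + 1) ^ 3" by (simp add: power3_eq_cube algebra_simps)
  then have "(3 * ?D * ?D + 1) ^ (3 * n * m) \<le> (?D + 1) ^ (3 * (3 * n * m))"
    by (metis power_mono power_mult zero_le)
  also have "\<dots> < (?D + 1) ^ ?D"
  proof -
    have "3 * (3 * n * m) \<le> m * (18 * m + 9)" using n by simp
    also have "\<dots> < m * (m * m)"
    proof -
      have "18 * m + 9 < m * m" using m mult_le_mono1[OF m, of m] by linarith
      then show ?thesis using m by simp
    qed
    finally have "3 * (3 * n * m) < ?D" by (simp add: power3_eq_cube)
    moreover have "1 < ?D + 1" using m by simp
    ultimately show ?thesis by (simp add: power_strict_increasing_iff)
  qed
  finally show ?thesis .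
qed

text \<open>The parameters \<open>x (0, l, p)\<close>, \<open>x (1, l, p)\<close>, \<open>x (2, l, p)\<close> play the roles of
  \<open>\<alpha>\<^sub>l A\<^sub>l\<^sub>,\<^sub>2\<^sub>p\<close>, \<open>B\<^sub>l\<^sub>,\<^sub>2\<^sub>p\<close> and \<open>C\<^sub>l\<^sub>,\<^sub>2\<^sub>p\<close>.\<close>
definition ot_param ::
    "nat \<Rightarrow> (nat \<times> nat \<times> nat \<Rightarrow> complex) \<Rightarrow> nat \<times> nat \<times> nat \<Rightarrow> complex" where
  "ot_param n x v = (\<Sum>l<n. x (0, l, fst v) * x (1, l, fst (snd v)) * x (2, l, snd (snd v)))"

lemma even_entries_OT:
  assumes "T \<in> OT n" and "2 * m \<le> n"
  obtains x where "\<And>v. v \<in> cube m \<Longrightarrow> even_entries T v = ot_param n x v"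
proof -
  obtain A B C \<alpha> where T: "\<And>i j k. i < n \<Longrightarrow> j < n \<Longrightarrow> k < n \<Longrightarrow>
      T i j k = (\<Sum>l<n. \<alpha> l * A l i * B l j * C l k)"
    using assms(1) unfolding OT_def by blast
  define x :: "nat \<times> nat \<times> nat \<Rightarrow> complex" where
    "x = (\<lambda>(s, l, p). if s = 0 then \<alpha> l * A l (2 * p) else if s = 1 then B l (2 * p) else C l (2 * p))"
  have "even_entries T v = ot_param n x v" if "v \<in> cube m" for v
    using that assms(2) by (auto simp: even_entries_def ot_param_def x_def T mult.assoc)
  then show ?thesis by (rule that)
qed

lemma ot_param_polyfun:
  assumes "v \<in> cube m"
  shows "(\<lambda>x. ot_param n x v) \<in> polyfun ({..<3} \<times> {..<n} \<times> {..<m}) 3"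
  unfolding ot_param_def
proof (rule polyfun_sum)
  let ?X = "{..<3::nat} \<times> {..<n} \<times> {..<m}"
  fix l assume "l \<in> {..<n}"
  then have "(\<lambda>x. x (i, l, p)) \<in> polyfun ?X 1" if "i < 3" "p < m" for i p
    using that by (intro var_in_polyfun) auto
  with assms have "(\<lambda>x. x (0, l, fst v) * x (1, l, fst (snd v)) * x (2, l, snd (snd v)))
      \<in> polyfun ?X (1 + 1 + 1)"
    by (intro polyfun_mult) auto
  then show "(\<lambda>x. x (0, l, fst v) * x (1, l, fst (snd v)) * x (2, l, snd (snd v))) \<in> polyfun ?X 3"
    by (simp add: numeral_3_eq_3)
qed

lemma ot_param_polynomial_relation:
  assumes m: "19 \<le> m" and n: "n \<le> 2 * m + 1"
  shows "\<exists>c. (\<exists>e\<in>PiE (cube m) (\<lambda>_. {..m ^ 3}). c e \<noteq> 0) \<and>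
    (\<forall>x. (\<Sum>e\<in>PiE (cube m) (\<lambda>_. {..m ^ 3}). c e * monomial (cube m) e (ot_param n x)) = 0)"
proof -
  let ?V = "cube m" and ?X = "{..<3::nat} \<times> {..<n} \<times> {..<m}"
  have "card ?V = m ^ 3" "card ?X = 3 * n * m"
    by (simp_all add: card_cartesian_product power3_eq_cube)
  then have count: "(3 * m ^ 3 * card ?V + 1) ^ card ?X < (m ^ 3 + 1) ^ card ?V"
    using parameter_count_less[OF m n] by (simp add: mult.assoc)
  have "finite ?X" "finite ?V" by simp_all
  then show ?thesis by (rule polynomial_relation_exists[OF _ _ ot_param_polyfun count])
qed

lemma closure_OT_annihilated_by_polynomial:
  assumes m: "19 \<le> m" and n: "2 * m \<le> n" "n \<le> 2 * m + 1"
  obtains c where "\<exists>e\<in>PiE (cube m) (\<lambda>_. {..m ^ 3}). c e \<noteq> 0"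
    and "\<And>T. T \<in> closure (OT n) \<Longrightarrow>
      (\<Sum>e\<in>PiE (cube m) (\<lambda>_. {..m ^ 3}). c e * monomial (cube m) e (even_entries T)) = 0"
proof -
  let ?E = "PiE (cube m) (\<lambda>_. {..m ^ 3})"
  obtain c where c: "\<exists>e\<in>?E. c e \<noteq> 0"
    and c_param: "\<And>x. (\<Sum>e\<in>?E. c e * monomial (cube m) e (ot_param n x)) = 0"
    using ot_param_polynomial_relation[OF m n(2)] by blast
  define G where "G T = (\<Sum>e\<in>?E. c e * monomial (cube m) e (even_entries T))" for T
  have "continuous_on UNIV G"
    unfolding G_def monomial_def even_entries_def
    by (intro continuous_intros continuous_on_tensor_entry)
  then have closed: "closed {T. G T = 0}"
    using closed_Collect_eq[OF _ continuous_on_const] by blast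
  have "OT n \<subseteq> {T. G T = 0}"
  proof
    fix T assume "T \<in> OT n"
    obtain x where "\<And>v. v \<in> cube m \<Longrightarrow> even_entries T v = ot_param n x v"
      using even_entries_OT[OF \<open>T \<in> OT n\<close> n(1)] by blast
    then have "G T = (\<Sum>e\<in>?E. c e * monomial (cube m) e (ot_param n x))"
      unfolding G_def by (simp cong: monomial_cong)
    then show "T \<in> {T. G T = 0}" using c_param by simp
  qed
  then have "closure (OT n) \<subseteq> {T. G T = 0}" by (rule closure_minimal[OF _ closed])
  with c show ?thesis using that unfolding G_def by blast
qed

definition iso_weight :: "nat \<Rightarrow> nat \<Rightarrow> complex" where
  "iso_weight m i = (if i < 2 * m then if even i then 1 else \<i> else 0)"

definition iso_tensor :: "nat \<Rightarrow> (nat \<times> nat \<times> nat \<Rightarrow> complex) \<Rightarrow> ctensor" where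
  "iso_tensor m y i j k =
     iso_weight m i * iso_weight m j * iso_weight m k * y (i div 2, j div 2, k div 2)"

lemma iso_tensor_in_tensors: "2 * m \<le> n \<Longrightarrow> iso_tensor m y \<in> tensors n"
  by (auto simp: tensors_def iso_tensor_def iso_weight_def)

lemma even_entries_iso_tensor: "v \<in> cube m \<Longrightarrow> even_entries (iso_tensor m y) v = y v"
  by (auto simp: even_entries_def iso_tensor_def iso_weight_def)

lemma sum_alternating_pairs:
  "(\<Sum>s<2 * (m :: nat). (if even s then 1 else -1) * h (s div 2) :: complex) = 0"
  by (induction m) auto

lemma sum_iso_weight_square:
  assumes "2 * m \<le> n"
  shows "(\<Sum>s<n. iso_weight m s * iso_weight m s * h (s div 2)) = 0"
proof -
  have "(\<Sum>s<n. iso_weight m s * iso_weight m s * h (s div 2)) =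
      (\<Sum>s<2 * m. iso_weight m s * iso_weight m s * h (s div 2))"
    by (rule sum.mono_neutral_right) (use assms in \<open>auto simp: iso_weight_def\<close>)
  also have "\<dots> = (\<Sum>s<2 * m. (if even s then 1 else -1) * h (s div 2))"
    by (rule sum.cong) (auto simp: iso_weight_def)
  finally show ?thesis using sum_alternating_pairs by simp
qed

lemma iso_tensor_contractions:
  assumes "2 * m \<le> n"
  shows "(\<Sum>s<n. iso_tensor m y s a b * iso_tensor m y s c d) = 0"
    and "(\<Sum>s<n. iso_tensor m y a s b * iso_tensor m y c s d) = 0"
    and "(\<Sum>s<n. iso_tensor m y a b s * iso_tensor m y c d s) = 0"
  using sum_iso_weight_square[OF assms, of "\<lambda>q. iso_weight m a * iso_weight m b * iso_weight m c *
      iso_weight m d * y (q, a div 2, b div 2) * y (q, c div 2, d div 2)"]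
    sum_iso_weight_square[OF assms, of "\<lambda>q. iso_weight m a * iso_weight m b * iso_weight m c *
      iso_weight m d * y (a div 2, q, b div 2) * y (c div 2, q, d div 2)"]
    sum_iso_weight_square[OF assms, of "\<lambda>q. iso_weight m a * iso_weight m b * iso_weight m c *
      iso_weight m d * y (a div 2, b div 2, q) * y (c div 2, d div 2, q)"]
  by (simp_all add: iso_tensor_def mult_ac)

lemma iso_tensor_slice_families_zero:
  assumes "2 * m \<le> n"
    and "M \<in> {xslice (iso_tensor m y), yslice (iso_tensor m y), zslice (iso_tensor m y)}"
  shows "fam_TM n M \<subseteq> {0}" and "fam_MT n M \<subseteq> {0}"
  using assms(2)
  by (auto simp: fam_TM_def fam_MT_def mmult_def mtrans_def xslice_def yslice_def zslice_def
      fun_eq_iff iso_tensor_contractions[OF assms(1)])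

lemma iso_tensor_not_in_closure_OT:
  assumes "19 \<le> m" "2 * m \<le> n" "n \<le> 2 * m + 1"
  obtains y where "iso_tensor m y \<notin> closure (OT n)"
proof -
  obtain c where c: "\<exists>e\<in>PiE (cube m) (\<lambda>_. {..m ^ 3}). c e \<noteq> 0"
    and vanish: "\<And>T. T \<in> closure (OT n) \<Longrightarrow>
      (\<Sum>e\<in>PiE (cube m) (\<lambda>_. {..m ^ 3}). c e * monomial (cube m) e (even_entries T)) = 0"
    using closure_OT_annihilated_by_polynomial[OF assms] by blast
  obtain y where "(\<Sum>e\<in>PiE (cube m) (\<lambda>_. {..m ^ 3}). c e * monomial (cube m) e y) \<noteq> 0"
    using polynomial_nonzero_coeff_imp_nonzero_value[OF _ c] by auto
  then have "iso_tensor m y \<notin> closure (OT n)"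
    using vanish[of "iso_tensor m y"] by (auto simp: even_entries_iso_tensor cong: monomial_cong)
  then show ?thesis by (rule that)
qed

theorem theorem52:
  shows "\<exists>N. \<forall>n\<ge>N. \<exists>T \<in> tensors n. T \<notin> closure (OT n) \<and>
    (\<forall>M \<in> {xslice T, yslice T, zslice T}.
       good_family n (fam_TM n M) \<and> good_family n (fam_MT n M))"
proof (intro exI[of _ 38] allI impI)
  fix n :: nat assume "38 \<le> n"
  define m where "m = n div 2"
  have m: "19 \<le> m" "2 * m \<le> n" "n \<le> 2 * m + 1" using \<open>38 \<le> n\<close> unfolding m_def by auto
  obtain y where y: "iso_tensor m y \<notin> closure (OT n)"
    using iso_tensor_not_in_closure_OT[OF m] .
  have "good_family n (fam_TM n M) \<and> good_family n (fam_MT n M)"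
    if "M \<in> {xslice (iso_tensor m y), yslice (iso_tensor m y), zslice (iso_tensor m y)}" for M
    using iso_tensor_slice_families_zero[OF m(2) that] good_family_if_subset_zero \<open>38 \<le> n\<close>
    by simp
  then show "\<exists>T \<in> tensors n. T \<notin> closure (OT n) \<and>
      (\<forall>M \<in> {xslice T, yslice T, zslice T}. good_family n (fam_TM n M) \<and> good_family n (fam_MT n M))"
    using iso_tensor_in_tensors[OF m(2)] y by blast
qed

end
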